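(* Let $G \in \mathcal{C}_3$ be a digraph with at least one arc. Then in every $\vec{\chi}(G)$-dicolouring of $G$ there is at least one monochromatic arc, i.e. an arc both of whose endpoints lie in the same colour class.
   Context: All digraphs are finite and simple: no loops, no multiple arcs, and for two distinct vertices $u,v$ at most one of the arcs $uv$, $vu$ is present. A $k$-dicolouring of a digraph $D$ is a partition of $V(D)$ into $k$ sets $V_1,\dots,V_k$ (some possibly empty) such that each induced subdigraph $D[V_i]$ is acyclic (contains no directed cycle). The dichromatic number $\vec{\chi}(D)$ is the smallest $k$ such that $D$ admits a $k$-dicolouring. $TT_3$ denotes the transitive tournament on 3 vertices (a triangle oriented acyclically); a directed triangle is a directed cycle of length 3. $\mathcal{C}_3$ is the class of digraphs that contain no $TT_3$ as a subdigraph and contain no induced directed cycle of length at least $4$. *)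

theory Defs
  imports Main
begin

definition simple_digraph :: "'a set \<Rightarrow> ('a \<times> 'a) set \<Rightarrow> bool" where
  "simple_digraph V A \<longleftrightarrow> finite V \<and> A \<subseteq> V \<times> V \<and> (\<forall>x. (x, x) \<notin> A)
     \<and> (\<forall>x y. (x, y) \<in> A \<longrightarrow> (y, x) \<notin> A)"

definition induced_acyclic :: "('a \<times> 'a) set \<Rightarrow> 'a set \<Rightarrow> bool" where
  "induced_acyclic A S \<longleftrightarrow> acyclic (A \<inter> (S \<times> S))"

definition is_dicolouring :: "'a set \<Rightarrow> ('a \<times> 'a) set \<Rightarrow> nat \<Rightarrow> ('a \<Rightarrow> nat) \<Rightarrow> bool" where
  "is_dicolouring V A k c \<longleftrightarrow> (\<forall>v\<in>V. c v < k) \<and>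
     (\<forall>i<k. induced_acyclic A {v\<in>V. c v = i})"

definition dichromatic_number :: "'a set \<Rightarrow> ('a \<times> 'a) set \<Rightarrow> nat" where
  "dichromatic_number V A = (LEAST k. \<exists>c. is_dicolouring V A k c)"

definition contains_TT3 :: "'a set \<Rightarrow> ('a \<times> 'a) set \<Rightarrow> bool" where
  "contains_TT3 V A \<longleftrightarrow> (\<exists>a\<in>V. \<exists>b\<in>V. \<exists>c\<in>V. a \<noteq> b \<and> b \<noteq> c \<and> a \<noteq> c \<and>
     (a, b) \<in> A \<and> (b, c) \<in> A \<and> (a, c) \<in> A)"

definition induced_dicycle :: "'a set \<Rightarrow> ('a \<times> 'a) set \<Rightarrow> 'a list \<Rightarrow> bool" where
  "induced_dicycle V A cs \<longleftrightarrow> length cs \<ge> 2 \<and> distinct cs \<and> set cs \<subseteq> V \<and>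
     (\<forall>i<length cs. (cs ! i, cs ! ((i + 1) mod length cs)) \<in> A) \<and>
     (\<forall>i<length cs. \<forall>j<length cs. (cs ! i, cs ! j) \<in> A \<longrightarrow> j = (i + 1) mod length cs)"

definition in_C3 :: "'a set \<Rightarrow> ('a \<times> 'a) set \<Rightarrow> bool" where
  "in_C3 V A \<longleftrightarrow> \<not> contains_TT3 V A \<and>
     \<not> (\<exists>cs. induced_dicycle V A cs \<and> length cs \<ge> 4)"

end

theory Submission
  imports Defs
begin

text \<open>Suppose a \<open>\<chi>\<close>-dicolouring \<open>c\<close> of \<open>G\<close> has no monochromatic arc, so \<open>\<chi> \<ge> 2\<close>.
  Merge the last colour class into the first. Every arc inside the union joins the two
  original classes, so it contains no directed triangle; loops and digons are excluded
  by simplicity. A directed cycle in the union would therefore yield, via a shortest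
  closed walk, an induced directed cycle of length at least 4, which graphs in
  \<open>\<C>\<^sub>3\<close> do not have. Hence the merged colouring is a \<open>(\<chi> - 1)\<close>-dicolouring,
  contradicting minimality of \<open>\<chi>\<close>.\<close>

definition closed_walk :: "('a \<times> 'a) set \<Rightarrow> 'a list \<Rightarrow> bool" where
  "closed_walk R xs \<longleftrightarrow> xs \<noteq> [] \<and> (\<forall>i<length xs. (xs ! i, xs ! (Suc i mod length xs)) \<in> R)"

definition chordless :: "('a \<times> 'a) set \<Rightarrow> 'a list \<Rightarrow> bool" where
  "chordless R xs \<longleftrightarrow>
     (\<forall>i<length xs. \<forall>j<length xs. (xs ! i, xs ! j) \<in> R \<longrightarrow> j = Suc i mod length xs)"

lemma closed_walk_if_not_acyclic:
  assumes "\<not> acyclic R"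
  shows "\<exists>xs. closed_walk R xs"
proof -
  obtain x where "(x, x) \<in> R\<^sup>+"
    using assms unfolding acyclic_def by blast
  then obtain n f where n: "n > 0" and f: "f 0 = x" "f n = x" "\<forall>i<n. (f i, f (Suc i)) \<in> R"
    by (auto simp: trancl_power relpow_fun_conv)
  have "(f i, f (Suc i mod n)) \<in> R" if "i < n" for i
    using that f by (cases "Suc i = n") auto
  then have "closed_walk R (map f [0..<n])"
    using n unfolding closed_walk_def by auto
  then show ?thesis ..
qed

lemma closed_walk_set:
  assumes "closed_walk R xs"
  shows "set xs \<subseteq> Domain R"
proof
  fix x assume "x \<in> set xs"
  then obtain i where "i < length xs" "x = xs ! i"
    by (metis in_set_conv_nth)
  then show "x \<in> Domain R"
    using assms unfolding closed_walk_def by blast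
qed

lemma closed_walk_rotate:
  assumes "closed_walk R xs"
  shows "closed_walk R (rotate m xs)"
  unfolding closed_walk_def
proof (intro conjI allI impI)
  show "rotate m xs \<noteq> []"
    using assms unfolding closed_walk_def by simp
next
  fix i
  let ?n = "length xs"
  assume "i < length (rotate m xs)"
  then have i: "i < ?n"
    by simp
  then have "Suc i mod ?n < ?n"
    by (intro mod_less_divisor) linarith
  then have "rotate m xs ! (Suc i mod ?n) = xs ! ((m + Suc i mod ?n) mod ?n)"
    by (rule nth_rotate)
  also have "(m + Suc i mod ?n) mod ?n = Suc ((m + i) mod ?n) mod ?n"
    by (simp add: mod_Suc_eq mod_add_right_eq)
  finally have "rotate m xs ! (Suc i mod ?n) = xs ! (Suc ((m + i) mod ?n) mod ?n)" .
  moreover have "rotate m xs ! i = xs ! ((m + i) mod ?n)"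
    using i by (rule nth_rotate)
  moreover have "(xs ! ((m + i) mod ?n), xs ! (Suc ((m + i) mod ?n) mod ?n)) \<in> R"
    using assms i unfolding closed_walk_def by simp
  ultimately show "(rotate m xs ! i, rotate m xs ! (Suc i mod length (rotate m xs))) \<in> R"
    by simp
qed

lemma closed_walk_take:
  assumes cw: "closed_walk R xs" and d: "d < length xs" and closes: "(xs ! d, xs ! 0) \<in> R"
  shows "closed_walk R (take (Suc d) xs)"
  unfolding closed_walk_def
proof (intro conjI allI impI)
  show "take (Suc d) xs \<noteq> []"
    using d by (cases xs) auto
next
  fix i assume "i < length (take (Suc d) xs)"
  then have i: "i \<le> d"
    using d by simp
  show "(take (Suc d) xs ! i, take (Suc d) xs ! (Suc i mod length (take (Suc d) xs))) \<in> R"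
  proof (cases "i = d")
    case True
    then show ?thesis
      using d closes by simp
  next
    case False
    then have "Suc i < length xs"
      using i d by simp
    moreover have "(xs ! i, xs ! (Suc i mod length xs)) \<in> R"
      using cw \<open>Suc i < length xs\<close> unfolding closed_walk_def by (meson Suc_lessD)
    ultimately show ?thesis
      using False i d by simp
  qed
qed

text \<open>Rotating the head of the chord to the front, the chord closes up a proper
  prefix of the walk.\<close>
lemma closed_walk_shorten_by_chord:
  assumes cw: "closed_walk R xs" and i: "i < length xs" and j: "j < length xs"
    and chord: "(xs ! i, xs ! j) \<in> R" and not_next: "j \<noteq> Suc i mod length xs"
  shows "\<exists>ys. closed_walk R ys \<and> length ys < length xs"
proof -
  define n where "n = length xs"
  define d where "d = (i + n - j) mod n"
  define ys where "ys = rotate j xs"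
  have "n > 0"
    using i n_def by linarith
  have jd: "(j + d) mod n = i"
  proof -
    have "(j + d) mod n = (j + (i + n - j)) mod n"
      unfolding d_def by (simp add: mod_add_right_eq)
    also have "j + (i + n - j) = i + n"
      using j n_def by simp
    finally show ?thesis
      using i n_def by simp
  qed
  have "Suc d < n"
  proof -
    have "d \<noteq> n - 1"
    proof
      assume "d = n - 1"
      then have "Suc i mod n = Suc ((j + (n - 1)) mod n) mod n"
        using jd by simp
      also have "\<dots> = (j + n) mod n"
        using \<open>n > 0\<close> by (simp add: mod_Suc_eq)
      finally show False
        using not_next j n_def by simp
    qed
    moreover have "d < n"
      unfolding d_def using \<open>n > 0\<close> by simp
    ultimately show ?thesis
      by linarith
  qed
  have "ys ! d = xs ! i" "ys ! 0 = xs ! j"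
    using \<open>Suc d < n\<close> \<open>n > 0\<close> jd j unfolding ys_def n_def by (simp_all add: nth_rotate)
  then have "closed_walk R (take (Suc d) ys)"
    using closed_walk_take[OF closed_walk_rotate[OF cw]] \<open>Suc d < n\<close> chord
    unfolding ys_def n_def by simp
  moreover have "length (take (Suc d) ys) < length xs"
    using \<open>Suc d < n\<close> unfolding ys_def n_def by simp
  ultimately show ?thesis
    by blast
qed

lemma chordless_closed_walk_if_closed_walk:
  "closed_walk R xs \<Longrightarrow> \<exists>ys. closed_walk R ys \<and> chordless R ys"
proof (induction "length xs" arbitrary: xs rule: less_induct)
  case less
  show ?case
  proof (cases "chordless R xs")
    case False
    then obtain i j where "i < length xs" "j < length xs" "(xs ! i, xs ! j) \<in> R"
      "j \<noteq> Suc i mod length xs"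
      unfolding chordless_def by blast
    then obtain ys where "closed_walk R ys" "length ys < length xs"
      using closed_walk_shorten_by_chord[OF less.prems] by blast
    then show ?thesis
      using less.hyps by blast
  qed (use less.prems in blast)
qed

text \<open>A repeated vertex would receive an arc from the predecessor of both occurrences.\<close>
lemma chordless_closed_walk_distinct:
  assumes cw: "closed_walk R xs" and ch: "chordless R xs"
  shows "distinct xs"
  unfolding distinct_conv_nth
proof (intro allI impI)
  fix i j
  define n where "n = length xs"
  assume i: "i < length xs" and j: "j < length xs" and "i \<noteq> j"
  define p where "p = (i + n - 1) mod n"
  have "n > 0"
    using i n_def by linarith
  then have p: "p < n"
    unfolding p_def by simp
  have next_p: "Suc p mod n = i"
  proof -
    have "Suc p mod n = Suc (i + n - 1) mod n"
      unfolding p_def by (simp add: mod_Suc_eq)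
    also have "Suc (i + n - 1) = i + n"
      using \<open>n > 0\<close> by simp
    finally show ?thesis
      using i n_def by simp
  qed
  have "(xs ! p, xs ! i) \<in> R"
    using cw p next_p unfolding closed_walk_def n_def by metis
  show "xs ! i \<noteq> xs ! j"
  proof
    assume "xs ! i = xs ! j"
    then have "j = Suc p mod n"
      using \<open>(xs ! p, xs ! i) \<in> R\<close> ch p j unfolding chordless_def n_def by auto
    then show False
      using next_p \<open>i \<noteq> j\<close> by simp
  qed
qed

lemma closed_walk_length_1: "closed_walk R [x] \<longleftrightarrow> (x, x) \<in> R"
  by (simp add: closed_walk_def)

lemma closed_walk_length_2: "closed_walk R [x, y] \<longleftrightarrow> (x, y) \<in> R \<and> (y, x) \<in> R"
  unfolding closed_walk_def by (auto simp: All_less_Suc)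

lemma closed_walk_length_3:
  "closed_walk R [x, y, z] \<longleftrightarrow> (x, y) \<in> R \<and> (y, z) \<in> R \<and> (z, x) \<in> R"
  unfolding closed_walk_def by (auto simp: All_less_Suc)

lemma induced_dicycle_if_chordless_closed_walk:
  assumes cw: "closed_walk (A \<inter> S \<times> S) xs" and ch: "chordless (A \<inter> S \<times> S) xs"
    and "S \<subseteq> V" and "length xs \<ge> 2"
  shows "induced_dicycle V A xs"
proof -
  have "set xs \<subseteq> S"
    using closed_walk_set[OF cw] by blast
  then have "(xs ! i, xs ! j) \<in> A \<longleftrightarrow> (xs ! i, xs ! j) \<in> A \<inter> S \<times> S"
    if "i < length xs" "j < length xs" for i j
    using that by auto
  then show ?thesis
    using assms \<open>set xs \<subseteq> S\<close> chordless_closed_walk_distinct[OF cw ch]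
    unfolding induced_dicycle_def closed_walk_def chordless_def by auto
qed

lemma induced_acyclic_if_no_directed_triangle:
  assumes simple: "simple_digraph V A"
    and no_long: "\<not> (\<exists>cs. induced_dicycle V A cs \<and> length cs \<ge> 4)"
    and "S \<subseteq> V"
    and no_triangle: "\<And>x y z. (x, y) \<in> A \<inter> S \<times> S \<Longrightarrow> (y, z) \<in> A \<inter> S \<times> S \<Longrightarrow>
      (z, x) \<notin> A \<inter> S \<times> S"
  shows "induced_acyclic A S"
  unfolding induced_acyclic_def
proof (rule ccontr)
  let ?R = "A \<inter> S \<times> S"
  assume "\<not> acyclic ?R"
  then obtain xs where cw: "closed_walk ?R xs" and ch: "chordless ?R xs"
    using closed_walk_if_not_acyclic chordless_closed_walk_if_closed_walk by blast
  have "length xs \<noteq> 0"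
    using cw unfolding closed_walk_def by simp
  moreover have "length xs \<noteq> 1"
  proof
    assume "length xs = 1"
    then obtain x where "xs = [x]"
      by (auto simp: length_Suc_conv)
    then show False
      using cw simple by (simp add: simple_digraph_def closed_walk_length_1)
  qed
  moreover have "length xs \<noteq> 2"
  proof
    assume "length xs = 2"
    then obtain x y where "xs = [x, y]"
      by (auto simp: length_Suc_conv numeral_2_eq_2)
    then show False
      using cw simple by (auto simp: simple_digraph_def closed_walk_length_2)
  qed
  moreover have "length xs \<noteq> 3"
  proof
    assume "length xs = 3"
    then obtain x y z where "xs = [x, y, z]"
      by (auto simp: length_Suc_conv numeral_3_eq_3)
    then show False
      using cw no_triangle by (auto simp: closed_walk_length_3)
  qed
  ultimately have "length xs \<ge> 4"
    by linarith
  moreover have "induced_dicycle V A xs"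
    using induced_dicycle_if_chordless_closed_walk[OF cw ch \<open>S \<subseteq> V\<close>] \<open>length xs \<ge> 4\<close>
    by simp
  ultimately show False
    using no_long by blast
qed

lemma no_directed_triangle_in_two_colour_classes:
  fixes c :: "'a \<Rightarrow> 'b"
  assumes no_mono: "\<not> (\<exists>(u, v)\<in>A. c u = c v)"
    and "(x, y) \<in> A \<inter> S \<times> S" "(y, z) \<in> A \<inter> S \<times> S"
    and S_def: "S = {v \<in> V. c v = a \<or> c v = b}"
  shows "(z, x) \<notin> A \<inter> S \<times> S"
proof
  assume "(z, x) \<in> A \<inter> S \<times> S"
  with assms have "c x \<noteq> c y" "c y \<noteq> c z" "c z \<noteq> c x"
    by auto
  moreover have "c x \<in> {a, b}" "c y \<in> {a, b}" "c z \<in> {a, b}"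
    using assms by auto
  ultimately show False
    by auto
qed

lemma is_dicolouring_merge_last:
  assumes col: "is_dicolouring V A k c" and "k \<ge> 2"
    and merged: "induced_acyclic A {v \<in> V. c v = 0 \<or> c v = k - 1}"
  shows "is_dicolouring V A (k - 1) (\<lambda>v. if c v = k - 1 then 0 else c v)"
    (is "is_dicolouring V A (k - 1) ?c")
  unfolding is_dicolouring_def
proof (intro conjI ballI allI impI)
  fix v assume "v \<in> V"
  then show "?c v < k - 1"
    using col \<open>k \<ge> 2\<close> unfolding is_dicolouring_def by fastforce
next
  fix i assume i: "i < k - 1"
  show "induced_acyclic A {v \<in> V. ?c v = i}"
  proof (cases "i = 0")
    case True
    then have "{v \<in> V. ?c v = i} = {v \<in> V. c v = 0 \<or> c v = k - 1}"
      by auto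
    then show ?thesis
      using merged by simp
  next
    case False
    then have "{v \<in> V. ?c v = i} = {v \<in> V. c v = i}"
      using i by auto
    then show ?thesis
      using col i unfolding is_dicolouring_def by simp
  qed
qed

lemma dichromatic_number_le: "is_dicolouring V A k c \<Longrightarrow> dichromatic_number V A \<le> k"
  unfolding dichromatic_number_def by (blast intro: Least_le)

theorem mainTheorem2:
  fixes V :: "'a set" and A :: "('a \<times> 'a) set" and c :: "'a \<Rightarrow> nat"
  assumes "simple_digraph V A"
    and "in_C3 V A"
    and "A \<noteq> {}"
    and "is_dicolouring V A (dichromatic_number V A) c"
  shows "\<exists>(u, v)\<in>A. c u = c v"
proof (rule ccontr)
  assume no_mono: "\<not> (\<exists>(u, v)\<in>A. c u = c v)"
  define k where "k = dichromatic_number V A"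
  obtain u v where "(u, v) \<in> A"
    using assms(3) by auto
  then have "u \<in> V" "v \<in> V" "c u \<noteq> c v"
    using no_mono assms(1) unfolding simple_digraph_def by auto
  moreover have "\<forall>v\<in>V. c v < k"
    using assms(4) unfolding is_dicolouring_def k_def by blast
  ultimately have "c u < k" "c v < k"
    by auto
  with \<open>c u \<noteq> c v\<close> have "k \<ge> 2"
    by linarith
  let ?S = "{v \<in> V. c v = 0 \<or> c v = k - 1}"
  have "induced_acyclic A ?S"
    using assms(2) unfolding in_C3_def
    by (intro induced_acyclic_if_no_directed_triangle[OF assms(1)]
        no_directed_triangle_in_two_colour_classes[OF no_mono]) auto
  then have "is_dicolouring V A (k - 1) (\<lambda>v. if c v = k - 1 then 0 else c v)"
    using is_dicolouring_merge_last assms(4) \<open>k \<ge> 2\<close> unfolding k_def by blast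
  then have "k \<le> k - 1"
    unfolding k_def by (rule dichromatic_number_le)
  with \<open>k \<ge> 2\<close> show False
    by simp
qed

end
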